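(* Let $p\geq 3$ and $q\geq 6$ be integers and let $C_{p,q}$ be a double chain consisting of $p$ points of $A$ and $q$ points of $B$, in general position. Then $\mu(D(C_{p,q}))=\binom{p+q}{2}-4$.
   Context: Let $A$ be the arc of a circle that goes from $(-5,2)$ to $(5,2)$ and passes through $(0,3/2)$, and let $B$ be the reflection of $A$ in the $x$-axis; then every point of $A$ (resp. $B$) lies above (resp. below) every line spanned by two points of $B$ (resp. $A$). For integers $p,q\geq 1$, a double chain $C_{p,q}$ is a set of $p+q$ points obtained by choosing $p$ points of $A$ and $q$ points of $B$. A set of points is in general position if no three are collinear. The disjointness graph of segments $D(P)$ is the graph whose vertices are all closed straight-line segments with both endpoints in $P$, two being adjacent if and only if they are disjoint. For a graph $G$ and $U\subseteq V(G)$, two distinct vertices $x,y\in U$ are $U$-mutually visible if $G$ contains a shortest $x$-$y$ path none of whose internal vertices lies in $U$; $U$ is a mutual-visibility set if every two distinct vertices of $U$ are $U$-mutually visible. $\mu(G)$ is the maximum size of a mutual-visibility set of $G$. *)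

theory Defs
  imports "HOL-Analysis.Analysis"
begin

text \<open>The circle through (-5,2), (5,2), (0,3/2) has centre (0,107/4) and radius 101/4.
  The arc A from (-5,2) to (5,2) through (0,3/2) is its lower part with -5 <= x <= 5.\<close>

definition arcA :: "(real \<times> real) set" where
  "arcA = {(x, y). x\<^sup>2 + (y - 107/4)\<^sup>2 = (101/4)\<^sup>2 \<and> -5 \<le> x \<and> x \<le> 5 \<and> y \<le> 2}"

definition arcB :: "(real \<times> real) set" where
  "arcB = (\<lambda>(x, y). (x, - y)) ` arcA"

definition general_position :: "(real \<times> real) set \<Rightarrow> bool" where
  "general_position P \<longleftrightarrow> (\<forall>S \<subseteq> P. card S = 3 \<longrightarrow> \<not> collinear S)"

definition double_chain :: "(real \<times> real) set \<Rightarrow> nat \<Rightarrow> nat \<Rightarrow> bool" where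
  "double_chain P p q \<longleftrightarrow> finite P \<and> P \<subseteq> arcA \<union> arcB \<and>
      card (P \<inter> arcA) = p \<and> card (P \<inter> arcB) = q"

definition seg_vertices :: "(real \<times> real) set \<Rightarrow> (real \<times> real) set set" where
  "seg_vertices P = {closed_segment a b | a b. a \<in> P \<and> b \<in> P \<and> a \<noteq> b}"

definition disj_adj :: "(real \<times> real) set \<Rightarrow> (real \<times> real) set \<Rightarrow> bool" where
  "disj_adj S T \<longleftrightarrow> S \<inter> T = {}"

definition is_walk :: "'v set \<Rightarrow> ('v \<Rightarrow> 'v \<Rightarrow> bool) \<Rightarrow> 'v list \<Rightarrow> bool" where
  "is_walk V E xs \<longleftrightarrow> xs \<noteq> [] \<and> set xs \<subseteq> V \<and>
      (\<forall>i. Suc i < length xs \<longrightarrow> E (xs ! i) (xs ! Suc i))"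

definition is_shortest_path :: "'v set \<Rightarrow> ('v \<Rightarrow> 'v \<Rightarrow> bool) \<Rightarrow> 'v \<Rightarrow> 'v \<Rightarrow> 'v list \<Rightarrow> bool" where
  "is_shortest_path V E x y xs \<longleftrightarrow> is_walk V E xs \<and> hd xs = x \<and> last xs = y \<and>
      (\<forall>ys. is_walk V E ys \<and> hd ys = x \<and> last ys = y \<longrightarrow> length xs \<le> length ys)"

definition mutually_visible :: "'v set \<Rightarrow> ('v \<Rightarrow> 'v \<Rightarrow> bool) \<Rightarrow> 'v set \<Rightarrow> 'v \<Rightarrow> 'v \<Rightarrow> bool" where
  "mutually_visible V E U x y \<longleftrightarrow>
     (\<exists>xs. is_shortest_path V E x y xs \<and> set (butlast (tl xs)) \<inter> U = {})"

definition mv_set :: "'v set \<Rightarrow> ('v \<Rightarrow> 'v \<Rightarrow> bool) \<Rightarrow> 'v set \<Rightarrow> bool" where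
  "mv_set V E U \<longleftrightarrow> U \<subseteq> V \<and>
     (\<forall>x\<in>U. \<forall>y\<in>U. x \<noteq> y \<longrightarrow> mutually_visible V E U x y)"

definition mu :: "'v set \<Rightarrow> ('v \<Rightarrow> 'v \<Rightarrow> bool) \<Rightarrow> nat" where
  "mu V E = Max {card U | U. mv_set V E U}"

end

(*
  Write U for a mutual-visibility set and W for the set of segments outside U.

  If W has at most three elements, then, as P has at least nine
  points, there are x, y, z in P such that xy and xz lie in U while every segment
  of W has an end among x, y, z.  The segments xy and xz meet; by pigeonhole over
  the sides of the lines xy and xz, two of the at least five remaining points span
  a segment disjoint from both, so xy and xz are at distance two.  But every common
  neighbour avoids x, y and z, hence lies in U, so xy and xz are not U-visible.

  A segment from a point of A to a point b of B never meets a chord of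
  B whose ends differ from b: A lies above the chord, and the x-order decides on
  which side of it b lies.  Hence a chord between consecutive points of one chain
  is disjoint from every segment avoiding its ends, and two crossing segments cannot
  have one end on A and three on B.  Remove the chord through the two leftmost
  points of A and those through the 1st/2nd, 3rd/4th and 5th/6th leftmost points of
  B: for two crossing remaining segments, one of the four removed chords avoids all
  their ends and is a common neighbour outside U.
*)

theory Submission
  imports Defs
begin

section \<open>Separating segments by hyperplanes\<close>

lemma closed_segments_disjoint_halfspaces:
  fixes a b a' b' c n :: "'a::real_inner"
  assumes "n \<bullet> (a - c) > k" "n \<bullet> (b - c) > k" "n \<bullet> (a' - c) \<le> k" "n \<bullet> (b' - c) \<le> k"
  shows "closed_segment a b \<inter> closed_segment a' b' = {}"
proof -
  have "closed_segment a b \<subseteq> {x. n \<bullet> x > k + n \<bullet> c}"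
    using assms by (intro closed_segment_subset convex_halfspace_gt) (auto simp: inner_diff_right)
  moreover have "closed_segment a' b' \<subseteq> {x. n \<bullet> x \<le> k + n \<bullet> c}"
    using assms by (intro closed_segment_subset convex_halfspace_le) (auto simp: inner_diff_right)
  ultimately show ?thesis
    by fastforce
qed

lemma closed_segment_meets_hyperplane_at_endpoint:
  fixes a b c n x :: "'a::real_inner"
  assumes "n \<bullet> (a - c) \<noteq> k" "n \<bullet> (b - c) = k" "x \<in> closed_segment a b" "n \<bullet> (x - c) = k"
  shows "x = b"
proof -
  obtain t where t: "x = (1 - t) *\<^sub>R a + t *\<^sub>R b"
    using assms(3) unfolding in_segment by blast
  have "x - c = (1 - t) *\<^sub>R (a - c) + t *\<^sub>R (b - c)"
    unfolding t by (simp add: algebra_simps)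
  then have "n \<bullet> (x - c) = (1 - t) * (n \<bullet> (a - c)) + t * (n \<bullet> (b - c))"
    by (simp add: inner_add_right)
  then have "(1 - t) * (n \<bullet> (a - c) - k) = 0"
    using assms(2,4) by (simp add: algebra_simps)
  then have "t = 1"
    using assms(1) by simp
  then show ?thesis
    using t by simp
qed

lemma closed_segments_disjoint_touching_hyperplane:
  fixes a b a' b' c n :: "'a::real_inner"
  assumes "n \<bullet> (a - c) > k" "n \<bullet> (b - c) = k" "n \<bullet> (a' - c) = k" "n \<bullet> (b' - c) < k" "b \<noteq> a'"
  shows "closed_segment a b \<inter> closed_segment a' b' = {}"
proof (rule ccontr)
  assume "closed_segment a b \<inter> closed_segment a' b' \<noteq> {}"
  then obtain x where x: "x \<in> closed_segment a b" "x \<in> closed_segment b' a'"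
    by (auto simp: closed_segment_commute)
  have "closed_segment a b \<subseteq> {x. n \<bullet> x \<ge> k + n \<bullet> c}"
    using assms by (intro closed_segment_subset convex_halfspace_ge) (auto simp: inner_diff_right)
  moreover have "closed_segment b' a' \<subseteq> {x. n \<bullet> x \<le> k + n \<bullet> c}"
    using assms by (intro closed_segment_subset convex_halfspace_le) (auto simp: inner_diff_right)
  ultimately have on: "n \<bullet> (x - c) = k"
    using x by (fastforce simp: inner_diff_right)
  have "x = b"
    by (rule closed_segment_meets_hyperplane_at_endpoint[where n = n and c = c and k = k])
      (use assms x on in auto)
  moreover have "x = a'"
    by (rule closed_segment_meets_hyperplane_at_endpoint[where n = n and c = c and k = k])
      (use assms x on in auto)
  ultimately show False
    using assms(5) by simp
qed

lemma inner_diff_diff_centre: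
  fixes c u v w :: "'a::real_inner"
  shows "(w - u) \<bullet> (w - v) = (w - c) \<bullet> (w - c) - ((u - c) + (v - c)) \<bullet> (w - c) + (u - c) \<bullet> (v - c)"
proof -
  have "(w - u) \<bullet> (w - v) = ((w - c) - (u - c)) \<bullet> ((w - c) - (v - c))"
    by simp
  then show ?thesis
    by (simp add: inner_diff_left inner_diff_right inner_add_left inner_add_right inner_commute)
qed

section \<open>Shortest paths and mutual visibility\<close>

lemma is_walk_length_ge_2:
  assumes "is_walk V E xs" "hd xs = s" "last xs = t" "s \<noteq> t"
  shows "2 \<le> length xs"
proof -
  have "xs \<noteq> []"
    using assms(1) unfolding is_walk_def by simp
  moreover have "length xs \<noteq> 1"
    using assms(2-4) by (auto simp: length_Suc_conv)
  ultimately show ?thesis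
    by (cases "length xs") auto
qed

lemma is_walk_two_iff: "is_walk V E [s, t] \<longleftrightarrow> s \<in> V \<and> t \<in> V \<and> E s t"
  unfolding is_walk_def by (auto simp: less_Suc_eq)

lemma is_walk_three_iff: "is_walk V E [s, w, t] \<longleftrightarrow> s \<in> V \<and> w \<in> V \<and> t \<in> V \<and> E s w \<and> E w t"
  unfolding is_walk_def by (auto simp: less_Suc_eq nth_Cons')

lemma mutually_visible_if_adjacent:
  assumes "s \<in> V" "t \<in> V" "s \<noteq> t" "E s t"
  shows "mutually_visible V E U s t"
proof -
  have "2 \<le> length ys" if "is_walk V E ys" "hd ys = s" "last ys = t" for ys
    using is_walk_length_ge_2[OF that assms(3)] .
  then have "is_shortest_path V E s t [s, t]"
    using assms unfolding is_shortest_path_def by (auto simp: is_walk_two_iff numeral_2_eq_2)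
  then show ?thesis
    unfolding mutually_visible_def by force
qed

lemma mutually_visible_if_common_neighbour:
  assumes "s \<in> V" "t \<in> V" "w \<in> V" "s \<noteq> t" "\<not> E s t" "E s w" "E w t" "w \<notin> U"
  shows "mutually_visible V E U s t"
proof -
  have "3 \<le> length ys" if "is_walk V E ys" "hd ys = s" "last ys = t" for ys
  proof (rule ccontr)
    assume "\<not> 3 \<le> length ys"
    then have "length ys = 2"
      using is_walk_length_ge_2[OF that assms(4)] by simp
    then have "ys = [s, t]"
      using that(2,3) by (auto simp: length_Suc_conv numeral_2_eq_2)
    then show False
      using that(1) assms(5) by (simp add: is_walk_two_iff)
  qed
  then have "is_shortest_path V E s t [s, w, t]"
    using assms unfolding is_shortest_path_def by (auto simp: is_walk_three_iff numeral_3_eq_3)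
  then show ?thesis
    unfolding mutually_visible_def using assms(8) by force
qed

lemma mutually_visible_distance_two:
  assumes "mutually_visible V E U s t" "s \<noteq> t" "\<not> E s t"
    and "s \<in> V" "r \<in> V" "t \<in> V" "E s r" "E r t"
  obtains m where "m \<in> V" "m \<notin> U" "E s m" "E m t"
proof -
  obtain xs where xs: "is_walk V E xs" "hd xs = s" "last xs = t" "set (butlast (tl xs)) \<inter> U = {}"
    and shortest: "\<And>ys. is_walk V E ys \<Longrightarrow> hd ys = s \<Longrightarrow> last ys = t \<Longrightarrow> length xs \<le> length ys"
    using assms(1) unfolding mutually_visible_def is_shortest_path_def by blast
  have "length xs \<le> 3"
    using shortest[of "[s, r, t]"] assms by (simp add: is_walk_three_iff)
  moreover have "length xs \<noteq> 2"
  proof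
    assume "length xs = 2"
    then have "xs = [s, t]"
      using xs(2,3) by (auto simp: length_Suc_conv numeral_2_eq_2)
    then show False
      using xs(1) assms(3) by (simp add: is_walk_two_iff)
  qed
  ultimately have "length xs = 3"
    using is_walk_length_ge_2[OF xs(1-3) assms(2)] by simp
  then obtain m where m: "xs = [s, m, t]"
    using xs(2,3) by (auto simp: length_Suc_conv numeral_3_eq_3)
  show thesis
  proof (rule that)
    show "m \<in> V" "E s m" "E m t"
      using xs(1) unfolding m by (simp_all add: is_walk_three_iff)
    show "m \<notin> U"
      using xs(4) unfolding m by simp
  qed
qed

lemma mv_set_Diff_if_common_neighbours:
  assumes "W \<subseteq> V"
    and "\<And>s t. s \<in> V - W \<Longrightarrow> t \<in> V - W \<Longrightarrow> s \<noteq> t \<Longrightarrow> \<not> E s t \<Longrightarrow>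
      \<exists>w\<in>W. E s w \<and> E w t"
  shows "mv_set V E (V - W)"
  unfolding mv_set_def
proof (intro conjI ballI impI)
  fix s t
  assume st: "s \<in> V - W" "t \<in> V - W" "s \<noteq> t"
  show "mutually_visible V E (V - W) s t"
  proof (cases "E s t")
    case True
    then show ?thesis
      using st by (intro mutually_visible_if_adjacent) auto
  next
    case False
    then obtain w where "w \<in> W" "E s w" "E w t"
      using assms(2)[OF st] by blast
    then show ?thesis
      using st False assms(1) by (intro mutually_visible_if_common_neighbour[of s V t w]) auto
  qed
qed simp

lemma mu_eqI:
  assumes "mv_set V E U" "card U = k" "\<And>U'. mv_set V E U' \<Longrightarrow> card U' \<le> k"
  shows "mu V E = k"
proof -
  have "{card U | U. mv_set V E U} \<subseteq> {..k}"
    using assms(3) by auto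
  then have "finite {card U | U. mv_set V E U}"
    by (rule finite_subset) simp
  then show ?thesis
    unfolding mu_def using assms by (intro Max_eqI) auto
qed

section \<open>Covering a few edges by a cherry\<close>

lemma obtain_three_edges_covering:
  fixes P :: "'a set" and F :: "'a set set"
  assumes "finite F" "card F \<le> 3" "\<forall>e\<in>F. e \<subseteq> P \<and> card e = 2" "2 \<le> card P"
  obtains e1 e2 e3 where "F \<subseteq> {e1, e2, e3}" "\<forall>e\<in>{e1, e2, e3}. e \<subseteq> P \<and> card e = 2"
proof -
  obtain e0 where e0: "e0 \<subseteq> P" "card e0 = 2"
    by (rule obtain_subset_with_card_n[OF assms(4)])
  obtain xs where xs: "set xs = F" "distinct xs"
    using finite_distinct_list[OF assms(1)] by blast
  define ys where "ys = xs @ replicate (3 - length xs) e0"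
  have "length ys = 3"
    using assms(2) distinct_card[OF xs(2)] xs(1) unfolding ys_def by simp
  then obtain e1 e2 e3 where ys: "ys = [e1, e2, e3]"
    by (auto simp: length_Suc_conv numeral_3_eq_3)
  have "F \<subseteq> set ys" "set ys \<subseteq> insert e0 F"
    unfolding ys_def using xs(1) by auto
  then have FE: "F \<subseteq> {e1, e2, e3}" and sub: "{e1, e2, e3} \<subseteq> insert e0 F"
    unfolding ys by simp_all
  show thesis
  proof (rule that[OF FE], rule ballI)
    fix e
    assume "e \<in> {e1, e2, e3}"
    then have "e = e0 \<or> e \<in> F"
      using sub by blast
    then show "e \<subseteq> P \<and> card e = 2"
      using assms(3) e0 by blast
  qed
qed

lemma obtain_point_outside_edges:
  assumes "finite P" "9 \<le> card P" "\<forall>e\<in>{e1, e2, e3}. e \<subseteq> P \<and> card e = 2"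
  obtains x where "x \<in> P" "x \<notin> e1" "x \<notin> e2" "x \<notin> e3" "x \<noteq> y" "x \<noteq> z"
proof -
  have "card e1 = 2" "card e2 = 2" "card e3 = 2"
    using assms(3) by simp_all
  then have "card (e1 \<union> e2 \<union> e3 \<union> {y, z}) \<le> 8"
    using card_Un_le[of "e1 \<union> e2 \<union> e3" "{y, z}"] card_Un_le[of "e1 \<union> e2" e3] card_Un_le[of e1 e2]
      card_insert_le_m1[of 2 "{z}" y]
    by simp
  moreover have "finite (e1 \<union> e2 \<union> e3 \<union> {y, z})"
    using \<open>card e1 = 2\<close> \<open>card e2 = 2\<close> \<open>card e3 = 2\<close> by (simp add: card_ge_0_finite)
  ultimately have "\<not> P \<subseteq> e1 \<union> e2 \<union> e3 \<union> {y, z}"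
    using assms(2) card_mono[of "e1 \<union> e2 \<union> e3 \<union> {y, z}" P] by linarith
  then show thesis
    using that by blast
qed

lemma three_edges_pairwise_disjoint:
  assumes E: "\<forall>e\<in>{e1, e2, e3}. e \<subseteq> P \<and> card e = 2"
    and no_cover: "\<nexists>y z. y \<in> P \<and> z \<in> P \<and> y \<noteq> z \<and> (\<forall>e\<in>{e1, e2, e3}. y \<in> e \<or> z \<in> e)"
  shows "e1 \<inter> e2 = {}" "e1 \<inter> e3 = {}" "e2 \<inter> e3 = {}"
proof -
  have disjoint: "e \<inter> e' = {}" if E_eq: "{e, e', e''} = {e1, e2, e3}" for e e' e''
  proof (rule ccontr)
    assume "e \<inter> e' \<noteq> {}"
    then obtain y where y: "y \<in> e" "y \<in> e'"
      by blast
    have "e \<subseteq> P" "e'' \<subseteq> P" "card e'' = 2"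
      using E unfolding E_eq[symmetric] by simp_all
    then obtain z where z: "z \<in> e''" "z \<noteq> y" "z \<in> P"
      unfolding card_2_iff by blast
    have "\<forall>f\<in>{e1, e2, e3}. y \<in> f \<or> z \<in> f"
      using y z unfolding E_eq[symmetric] by blast
    then show False
      using no_cover y z \<open>e \<subseteq> P\<close> by blast
  qed
  show "e1 \<inter> e2 = {}" "e1 \<inter> e3 = {}" "e2 \<inter> e3 = {}"
    by (rule disjoint; blast)+
qed

lemma obtain_cherry_covering_edges:
  fixes P :: "'a set" and F :: "'a set set"
  assumes P: "finite P" "9 \<le> card P" and F: "finite F" "card F \<le> 3" "\<forall>e\<in>F. e \<subseteq> P \<and> card e = 2"
  obtains x y z where "x \<in> P" "y \<in> P" "z \<in> P" "x \<noteq> y" "x \<noteq> z" "y \<noteq> z"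
    "{x, y} \<notin> F" "{x, z} \<notin> F" "\<forall>e\<in>F. x \<in> e \<or> y \<in> e \<or> z \<in> e"
proof -
  obtain e1 e2 e3 where FE: "F \<subseteq> {e1, e2, e3}" and E: "\<forall>e\<in>{e1, e2, e3}. e \<subseteq> P \<and> card e = 2"
    using obtain_three_edges_covering[OF F] P(2) by auto
  consider y z where "y \<in> P" "z \<in> P" "y \<noteq> z" "\<forall>e\<in>{e1, e2, e3}. y \<in> e \<or> z \<in> e"
    | "\<nexists>y z. y \<in> P \<and> z \<in> P \<and> y \<noteq> z \<and> (\<forall>e\<in>{e1, e2, e3}. y \<in> e \<or> z \<in> e)"
    by blast
  then show thesis
  proof cases
    case (1 y z)
    obtain x where x: "x \<in> P" "x \<notin> e1" "x \<notin> e2" "x \<notin> e3" "x \<noteq> y" "x \<noteq> z"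
      by (rule obtain_point_outside_edges[OF P E])
    show thesis
    proof (rule that[of x y z])
      show "{x, y} \<notin> F" "{x, z} \<notin> F"
        using x FE by blast+
      show "\<forall>e\<in>F. x \<in> e \<or> y \<in> e \<or> z \<in> e"
        using 1(4) FE by blast
    qed (use 1 x in auto)
  next
    case 2
    note disj = three_edges_pairwise_disjoint[OF E 2]
    have not_edge: "{a, b} \<notin> F" if "a \<in> e1" "b \<in> e2 \<union> e3" for a b
    proof
      assume "{a, b} \<in> F"
      then obtain f where "f \<in> {e1, e2, e3}" "a \<in> f" "b \<in> f"
        using FE by blast
      then show False
        using that disj by blast
    qed
    have "e1 \<noteq> {}" "e2 \<noteq> {}" "e3 \<noteq> {}"
      using E by auto
    then obtain x y z where "x \<in> e1" "y \<in> e2" "z \<in> e3"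
      by blast
    moreover have "e1 \<subseteq> P" "e2 \<subseteq> P" "e3 \<subseteq> P"
      using E by simp_all
    ultimately show thesis
      using FE disj not_edge by (intro that[of x y z]) blast+
  qed
qed

section \<open>Segments between points in general position\<close>

lemma closed_segment_in_seg_vertices:
  "a \<in> P \<Longrightarrow> b \<in> P \<Longrightarrow> a \<noteq> b \<Longrightarrow> closed_segment a b \<in> seg_vertices P"
  unfolding seg_vertices_def by blast

lemma seg_vertices_eq_image: "seg_vertices P = (\<lambda>S. convex hull S) ` {S. S \<subseteq> P \<and> card S = 2}"
  unfolding seg_vertices_def segment_convex_hull card_2_iff by blast

lemma finite_seg_vertices: "finite P \<Longrightarrow> finite (seg_vertices P)"
  unfolding seg_vertices_eq_image by simp

lemma card_seg_vertices:
  assumes "finite P"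
  shows "card (seg_vertices P) = card P choose 2"
proof -
  have "inj_on (\<lambda>S. convex hull S) {S. S \<subseteq> P \<and> card S = 2}"
  proof (rule inj_onI)
    fix S T :: "(real \<times> real) set"
    assume "S \<in> {S. S \<subseteq> P \<and> card S = 2}" "T \<in> {S. S \<subseteq> P \<and> card S = 2}"
      and hull: "convex hull S = convex hull T"
    then obtain a b c d where "S = {a, b}" "T = {c, d}"
      by (auto simp: card_2_iff)
    then show "S = T"
      using hull by (simp flip: segment_convex_hull)
  qed
  then show ?thesis
    unfolding seg_vertices_eq_image using assms by (simp add: card_image n_subsets)
qed

definition rot90 :: "real \<times> real \<Rightarrow> real \<times> real" where
  "rot90 d = (- snd d, fst d)"

lemma rot90_inner_self [simp]: "rot90 d \<bullet> d = 0"
  by (simp add: rot90_def inner_prod_def)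

lemma collinear_if_rot90_inner_eq_0:
  assumes "x \<noteq> y" "rot90 (y - x) \<bullet> (p - x) = 0"
  shows "collinear {x, y, p}"
proof -
  define d where "d = y - x"
  define t where "t = (p - x) \<bullet> d / (d \<bullet> d)"
  have "d \<bullet> d \<noteq> 0"
    using assms(1) unfolding d_def by simp
  have "(d \<bullet> d) *\<^sub>R (p - x) = ((p - x) \<bullet> d) *\<^sub>R d + (rot90 d \<bullet> (p - x)) *\<^sub>R rot90 d"
    by (simp add: rot90_def inner_prod_def prod_eq_iff algebra_simps)
  then have "(d \<bullet> d) *\<^sub>R (p - x) = ((p - x) \<bullet> d) *\<^sub>R d"
    using assms(2) unfolding d_def by simp
  moreover have "p - x = inverse (d \<bullet> d) *\<^sub>R ((d \<bullet> d) *\<^sub>R (p - x))"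
    using \<open>d \<bullet> d \<noteq> 0\<close> by simp
  ultimately have "p - x = inverse (d \<bullet> d) *\<^sub>R (((p - x) \<bullet> d) *\<^sub>R d)"
    by simp
  also have "\<dots> = t *\<^sub>R d"
    unfolding t_def by (simp add: divide_inverse mult.commute)
  finally have "p - x = t *\<^sub>R d" .
  then have "x = x + 0 *\<^sub>R d" "y = x + 1 *\<^sub>R d" "p = x + t *\<^sub>R d"
    unfolding d_def by (simp_all add: algebra_simps)
  then have "\<forall>q \<in> {x, y, p}. \<exists>c. q = x + c *\<^sub>R d"
    by blast
  then show ?thesis
    unfolding collinear_alt by blast
qed

lemma general_position_rot90_inner_neq_0:
  assumes "general_position P" "x \<in> P" "y \<in> P" "p \<in> P" "x \<noteq> y" "x \<noteq> p" "y \<noteq> p"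
  shows "rot90 (y - x) \<bullet> (p - x) \<noteq> 0"
proof
  assume "rot90 (y - x) \<bullet> (p - x) = 0"
  then have "collinear {x, y, p}"
    by (rule collinear_if_rot90_inner_eq_0[OF assms(5)])
  moreover have "card {x, y, p} = 3" "{x, y, p} \<subseteq> P"
    using assms by auto
  ultimately show False
    using assms(1) unfolding general_position_def by blast
qed

lemma general_position_Int_closed_segment:
  assumes "general_position P" "a \<in> P" "b \<in> P" "a \<noteq> b"
  shows "P \<inter> closed_segment a b = {a, b}"
proof -
  have "c \<in> {a, b}" if "c \<in> P" "c \<in> closed_segment a b" for c
  proof (rule ccontr)
    assume "c \<notin> {a, b}"
    then have "card {a, b, c} = 3" "{a, b, c} \<subseteq> P"
      using assms(2-4) that(1) by auto
    moreover have "collinear {a, b, c}"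
      using that(2) by (intro collinear_subset[OF collinear_closed_segment[of a b]]) auto
    ultimately show False
      using assms(1) unfolding general_position_def by blast
  qed
  then show ?thesis
    using assms(2,3) by blast
qed

lemma card_Int_seg_vertices:
  assumes "general_position P" "w \<in> seg_vertices P"
  shows "card (P \<inter> w) = 2"
proof -
  obtain a b where "a \<in> P" "b \<in> P" "a \<noteq> b" "w = closed_segment a b"
    using assms(2) unfolding seg_vertices_def by blast
  then show ?thesis
    using general_position_Int_closed_segment[OF assms(1)] by simp
qed

lemma closed_segments_disjoint_same_side:
  assumes "rot90 (y - x) \<bullet> (u - x) > 0 \<longleftrightarrow> rot90 (y - x) \<bullet> (v - x) > 0"
    and "rot90 (y - x) \<bullet> (u - x) \<noteq> 0" "rot90 (y - x) \<bullet> (v - x) \<noteq> 0"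
  shows "closed_segment u v \<inter> closed_segment x y = {}"
proof (cases "rot90 (y - x) \<bullet> (u - x) > 0")
  case True
  then show ?thesis
    using assms by (intro closed_segments_disjoint_halfspaces[where n = "rot90 (y - x)" and c = x and k = 0]) auto
next
  case False
  then show ?thesis
    using assms by (intro closed_segments_disjoint_halfspaces[where n = "- rot90 (y - x)" and c = x and k = 0]) auto
qed

lemma general_position_common_disjoint_segment:
  assumes gp: "general_position P" and "finite P" "8 \<le> card P"
    and xyz: "x \<in> P" "y \<in> P" "z \<in> P" "x \<noteq> y" "x \<noteq> z" "y \<noteq> z"
  obtains u v where "u \<in> P" "v \<in> P" "u \<noteq> v"
    "closed_segment u v \<inter> closed_segment x y = {}" "closed_segment u v \<inter> closed_segment x z = {}"
proof -
  define R where "R = P - {x, y, z}"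
  \<comment> \<open>two of the at least five points of R lie on the same sides of both lines\<close>
  define side where "side u = (rot90 (y - x) \<bullet> (u - x) > 0, rot90 (z - x) \<bullet> (u - x) > 0)" for u
  have "card R = card P - 3"
    unfolding R_def using assms by (subst card_Diff_subset) auto
  then have "card (UNIV :: (bool \<times> bool) set) < card R"
    using assms by (simp add: card_UNIV_bool)
  moreover have "card (side ` R) \<le> card (UNIV :: (bool \<times> bool) set)"
    by (rule card_mono) simp_all
  ultimately have "\<not> inj_on side R"
    using card_image by fastforce
  then obtain u v where uv: "u \<in> R" "v \<in> R" "u \<noteq> v" "side u = side v"
    unfolding inj_on_def by blast
  have "rot90 (y - x) \<bullet> (w - x) \<noteq> 0" "rot90 (z - x) \<bullet> (w - x) \<noteq> 0" if "w \<in> R" for w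
    by (rule general_position_rot90_inner_neq_0[OF gp]; use that xyz in \<open>force simp: R_def\<close>)+
  moreover have "(rot90 (y - x) \<bullet> (u - x) > 0) = (rot90 (y - x) \<bullet> (v - x) > 0)"
    and "(rot90 (z - x) \<bullet> (u - x) > 0) = (rot90 (z - x) \<bullet> (v - x) > 0)"
    using uv(4) by (simp_all add: side_def)
  ultimately have "closed_segment u v \<inter> closed_segment x y = {}" "closed_segment u v \<inter> closed_segment x z = {}"
    using uv(1,2) by (simp_all add: closed_segments_disjoint_same_side)
  then show thesis
    using uv that unfolding R_def by blast
qed

lemma mv_set_obtain_outside_common_neighbour:
  assumes gp: "general_position P" and P: "finite P" "8 \<le> card P"
    and U: "mv_set (seg_vertices P) disj_adj U"
    and xyz: "x \<in> P" "y \<in> P" "z \<in> P" "x \<noteq> y" "x \<noteq> z" "y \<noteq> z"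
    and st: "closed_segment x y \<in> U" "closed_segment x z \<in> U"
  obtains m where "m \<in> seg_vertices P - U" "m \<inter> closed_segment x y = {}" "m \<inter> closed_segment x z = {}"
proof -
  define V where "V = seg_vertices P"
  define s where "s = closed_segment x y"
  define t where "t = closed_segment x z"
  have "s \<in> V" "t \<in> V"
    unfolding s_def t_def V_def using xyz by (simp_all add: closed_segment_in_seg_vertices)
  have "s \<noteq> t"
    using xyz unfolding s_def t_def by (auto simp: doubleton_eq_iff)
  then have visible: "mutually_visible V disj_adj U s t"
    using U st unfolding mv_set_def V_def s_def t_def by blast
  have "\<not> disj_adj s t"
    unfolding disj_adj_def s_def t_def by auto
  obtain u v where uv: "u \<in> P" "v \<in> P" "u \<noteq> v"
    and "closed_segment u v \<inter> s = {}" "closed_segment u v \<inter> t = {}"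
    unfolding s_def t_def by (rule general_position_common_disjoint_segment[OF gp P xyz])
  then have "disj_adj s (closed_segment u v)" "disj_adj (closed_segment u v) t"
    unfolding disj_adj_def by blast+
  moreover have "closed_segment u v \<in> V"
    unfolding V_def using uv by (rule closed_segment_in_seg_vertices)
  ultimately obtain m where "m \<in> V" "m \<notin> U" "disj_adj s m" "disj_adj m t"
    using mutually_visible_distance_two[OF visible \<open>s \<noteq> t\<close> \<open>\<not> disj_adj s t\<close> \<open>s \<in> V\<close>]
      \<open>t \<in> V\<close> by blast
  then show thesis
    using that unfolding V_def s_def t_def disj_adj_def by blast
qed

lemma mv_set_card_le:
  assumes gp: "general_position P" and P: "finite P" "9 \<le> card P"
    and U: "mv_set (seg_vertices P) disj_adj U"
  shows "card U \<le> card (seg_vertices P) - 4"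
proof (rule ccontr)
  define V where "V = seg_vertices P"
  define W where "W = V - U"
  define F where "F = (\<lambda>w. P \<inter> w) ` W"
  assume "\<not> card U \<le> card (seg_vertices P) - 4"
  moreover have "U \<subseteq> V" "finite V"
    using U P unfolding mv_set_def V_def by (simp_all add: finite_seg_vertices)
  ultimately have "card W \<le> 3"
    unfolding W_def V_def by (simp add: card_Diff_subset finite_subset)
  moreover have "finite W"
    unfolding W_def using \<open>finite V\<close> by simp
  ultimately have F_card: "finite F" "card F \<le> 3"
    unfolding F_def using card_image_le[of W "\<lambda>w. P \<inter> w"] by simp_all
  have F_edges: "\<forall>e\<in>F. e \<subseteq> P \<and> card e = 2"
    unfolding F_def W_def V_def using card_Int_seg_vertices[OF gp] by blast
  obtain x y z where xyz: "x \<in> P" "y \<in> P" "z \<in> P" "x \<noteq> y" "x \<noteq> z" "y \<noteq> z"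
    and edges: "{x, y} \<notin> F" "{x, z} \<notin> F" and cover: "\<forall>e\<in>F. x \<in> e \<or> y \<in> e \<or> z \<in> e"
    using obtain_cherry_covering_edges[OF P F_card F_edges] by blast
  have "P \<inter> closed_segment x y = {x, y}" "P \<inter> closed_segment x z = {x, z}"
    using general_position_Int_closed_segment[OF gp] xyz by simp_all
  then have "closed_segment x y \<notin> W" "closed_segment x z \<notin> W"
    using edges unfolding F_def by (metis image_eqI)+
  then have "closed_segment x y \<in> U" "closed_segment x z \<in> U"
    unfolding W_def V_def using xyz by (simp_all add: closed_segment_in_seg_vertices)
  moreover have "8 \<le> card P"
    using P(2) by simp
  ultimately obtain m where m: "m \<in> W" "m \<inter> closed_segment x y = {}" "m \<inter> closed_segment x z = {}"
    using mv_set_obtain_outside_common_neighbour[OF gp P(1) _ U xyz] unfolding W_def V_def by blast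
  have "P \<inter> m \<in> F"
    using m(1) unfolding F_def by blast
  then have "x \<in> P \<inter> m \<or> y \<in> P \<inter> m \<or> z \<in> P \<inter> m"
    by (rule bspec[OF cover])
  then show False
    using m(2,3) by auto
qed

section \<open>The two arcs\<close>

definition reflect :: "real \<times> real \<Rightarrow> real \<times> real" where
  "reflect p = (fst p, - snd p)"

lemma reflect_reflect [simp]: "reflect (reflect p) = p"
  and fst_reflect [simp]: "fst (reflect p) = fst p"
  and linear_reflect: "linear reflect"
  by (auto simp: reflect_def intro: linearI)

lemma reflect_eq_iff [simp]: "reflect p = reflect q \<longleftrightarrow> p = q"
  by (metis reflect_reflect)

lemma inj_reflect: "inj reflect"
  by (simp add: inj_def)

lemma mem_arcA_iff:
  "p \<in> arcA \<longleftrightarrow> (fst p)\<^sup>2 + (snd p - 107/4)\<^sup>2 = (101/4)\<^sup>2 \<and> \<bar>fst p\<bar> \<le> 5 \<and> snd p \<le> 2"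
  unfolding arcA_def by (cases p) auto

lemma arcB_eq: "arcB = reflect ` arcA"
  unfolding arcB_def reflect_def by (auto simp: case_prod_beta)

lemma reflect_mem_arcB_iff [simp]: "reflect p \<in> arcB \<longleftrightarrow> p \<in> arcA"
  unfolding arcB_eq using inj_reflect by (auto simp: inj_image_mem_iff)

lemma reflect_mem_arcA_iff [simp]: "reflect p \<in> arcA \<longleftrightarrow> p \<in> arcB"
  by (metis reflect_mem_arcB_iff reflect_reflect)

definition centreB :: "real \<times> real" where
  "centreB = (0, - 107/4)"

lemma inner_centreB:
  "(p - centreB) \<bullet> (q - centreB) = fst p * fst q + (snd p + 107/4) * (snd q + 107/4)"
  by (simp add: inner_prod_def centreB_def)

lemma mem_arcB_iff:
  "p \<in> arcB \<longleftrightarrow> (p - centreB) \<bullet> (p - centreB) = (101/4)\<^sup>2 \<and> \<bar>fst p\<bar> \<le> 5 \<and> - 2 \<le> snd p"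
  using reflect_mem_arcA_iff[of p]
  unfolding mem_arcA_iff inner_centreB
  by (auto simp: reflect_def power2_eq_square algebra_simps)

lemma arcB_circle: "p \<in> arcB \<Longrightarrow> (fst p)\<^sup>2 + (snd p + 107/4)\<^sup>2 = (101/4)\<^sup>2"
  unfolding mem_arcB_iff inner_centreB by (simp add: power2_eq_square)

lemma arcB_height:
  assumes "p \<in> arcB"
  shows "99/4 \<le> snd p + 107/4" and "snd p + 107/4 \<le> 101/4"
proof -
  have circ: "(fst p)\<^sup>2 + (snd p + 107/4)\<^sup>2 = (101/4)\<^sup>2"
    using arcB_circle[OF assms] .
  have x: "\<bar>fst p\<bar> \<le> 5" and y: "- 2 \<le> snd p"
    using assms unfolding mem_arcB_iff by auto
  have "(fst p)\<^sup>2 \<le> 5\<^sup>2"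
    using x abs_le_square_iff[of "fst p" 5] by simp
  moreover have "(99/4::real)\<^sup>2 = (101/4)\<^sup>2 - 5\<^sup>2"
    by (simp add: power2_eq_square)
  ultimately have "(99/4)\<^sup>2 \<le> (snd p + 107/4)\<^sup>2"
    using circ by linarith
  then show "99/4 \<le> snd p + 107/4"
    by (rule power2_le_imp_le) (use y in linarith)
  have "(snd p + 107/4)\<^sup>2 \<le> (101/4)\<^sup>2"
    using circ zero_le_power2[of "fst p"] by linarith
  then show "snd p + 107/4 \<le> 101/4"
    by (rule power2_le_imp_le) simp
qed

lemma arcA_height:
  assumes "p \<in> arcA"
  shows "99/4 \<le> 107/4 - snd p" and "107/4 - snd p \<le> 101/4"
proof -
  have "reflect p \<in> arcB"
    using assms by simp
  from arcB_height[OF this] show "99/4 \<le> 107/4 - snd p" and "107/4 - snd p \<le> 101/4"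
    by (simp_all add: reflect_def)
qed

lemma arcA_arcB_disjoint: "arcA \<inter> arcB = {}"
proof -
  have False if "p \<in> arcA" "p \<in> arcB" for p
    using arcA_height(2)[OF that(1)] arcB_height(2)[OF that(2)] by linarith
  then show ?thesis
    by blast
qed

lemma arcB_slope_le:
  assumes u: "u \<in> arcB" and w: "w \<in> arcB"
  shows "\<bar>snd w - snd u\<bar> \<le> \<bar>fst w - fst u\<bar> / 4"
proof -
  define S where "S = (snd w + 107/4) + (snd u + 107/4)"
  have diff_squares: "(a - b) * ((a + c) + (b + c)) = (a + c)\<^sup>2 - (b + c)\<^sup>2" for a b c :: real
    by (simp add: power2_eq_square algebra_simps)
  have "(snd w - snd u) * S = (snd w + 107/4)\<^sup>2 - (snd u + 107/4)\<^sup>2"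
    unfolding S_def by (rule diff_squares)
  also have "\<dots> = (fst u)\<^sup>2 - (fst w)\<^sup>2"
    using arcB_circle[OF u] arcB_circle[OF w] by linarith
  also have "\<dots> = (fst w - fst u) * (- fst u - fst w)"
    by (simp add: power2_eq_square algebra_simps)
  finally have eq: "\<bar>snd w - snd u\<bar> * \<bar>S\<bar> = \<bar>fst w - fst u\<bar> * \<bar>- fst u - fst w\<bar>"
    by (metis abs_mult)
  have "99/2 \<le> \<bar>S\<bar>"
    using arcB_height[OF u] arcB_height[OF w] unfolding S_def by linarith
  then have "\<bar>snd w - snd u\<bar> * (99/2) \<le> \<bar>snd w - snd u\<bar> * \<bar>S\<bar>"
    by (rule mult_left_mono) simp
  also have "\<dots> \<le> \<bar>fst w - fst u\<bar> * 10"
    unfolding eq using u w unfolding mem_arcB_iff by (intro mult_left_mono) auto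
  finally have "\<bar>snd w - snd u\<bar> * (99/2) \<le> \<bar>fst w - fst u\<bar> * 10" .
  moreover have "s * (99/2) \<le> f * 10 \<Longrightarrow> 0 \<le> f \<Longrightarrow> s \<le> f / 4" for s f :: real
    by linarith
  ultimately show ?thesis
    using abs_ge_zero by blast
qed

lemma inj_on_fst_arcB: "inj_on fst arcB"
  using arcB_slope_le by (intro inj_onI) (force simp: prod_eq_iff)

lemma inj_on_fst_arcA: "inj_on fst arcA"
  using inj_on_fst_arcB unfolding inj_on_def
  by (metis fst_reflect reflect_mem_arcB_iff reflect_reflect)

text \<open>For u and v on the circle of arc B, the line through u and v is
  {p. chord_normal u v \<bullet> (p - centreB) = chord_level u v}.\<close>

definition chord_normal :: "real \<times> real \<Rightarrow> real \<times> real \<Rightarrow> real \<times> real" where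
  "chord_normal u v = (u - centreB) + (v - centreB)"

definition chord_level :: "real \<times> real \<Rightarrow> real \<times> real \<Rightarrow> real" where
  "chord_level u v = (101/4)\<^sup>2 + (u - centreB) \<bullet> (v - centreB)"

lemma arcB_chord_level_diff:
  assumes "w \<in> arcB"
  shows "chord_normal u v \<bullet> (w - centreB) - chord_level u v = - ((w - u) \<bullet> (w - v))"
  using assms inner_diff_diff_centre[of w u v centreB]
  unfolding mem_arcB_iff chord_normal_def chord_level_def by simp

lemma arcB_on_chord:
  assumes "u \<in> arcB" "v \<in> arcB"
  shows "chord_normal u v \<bullet> (u - centreB) = chord_level u v"
    and "chord_normal u v \<bullet> (v - centreB) = chord_level u v"
  using arcB_chord_level_diff[OF assms(1), of u v] arcB_chord_level_diff[OF assms(2), of u v] by simp_all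

text \<open>Arc B is so flat that the x-order alone decides on which side of a chord of B
  another point of B lies.\<close>

lemma arcB_chord_sides:
  assumes "u \<in> arcB" "v \<in> arcB" "w \<in> arcB"
  shows arcB_between_above_chord:
      "(fst w - fst u) * (fst w - fst v) < 0 \<Longrightarrow> chord_normal u v \<bullet> (w - centreB) > chord_level u v"
    and arcB_outside_below_chord:
      "(fst w - fst u) * (fst w - fst v) > 0 \<Longrightarrow> chord_normal u v \<bullet> (w - centreB) < chord_level u v"
proof -
  have "\<bar>(snd w - snd u) * (snd w - snd v)\<bar> \<le> (\<bar>fst w - fst u\<bar> / 4) * (\<bar>fst w - fst v\<bar> / 4)"
    unfolding abs_mult using arcB_slope_le assms by (intro mult_mono) auto
  then have small: "\<bar>(snd w - snd u) * (snd w - snd v)\<bar> \<le> \<bar>(fst w - fst u) * (fst w - fst v)\<bar> / 16"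
    by (simp add: abs_mult)
  have level: "chord_normal u v \<bullet> (w - centreB) - chord_level u v
      = - ((fst w - fst u) * (fst w - fst v) + (snd w - snd u) * (snd w - snd v))"
    using arcB_chord_level_diff[OF assms(3)] by (simp add: inner_prod_def)
  have sign: "(x < 0 \<longrightarrow> x + y < 0) \<and> (x > 0 \<longrightarrow> x + y > 0)" if "\<bar>y\<bar> \<le> \<bar>x\<bar> / 16" for x y :: real
    using that by (simp add: abs_if split: if_splits)
  show "(fst w - fst u) * (fst w - fst v) < 0 \<Longrightarrow> chord_normal u v \<bullet> (w - centreB) > chord_level u v"
    and "(fst w - fst u) * (fst w - fst v) > 0 \<Longrightarrow> chord_normal u v \<bullet> (w - centreB) < chord_level u v"
    using sign[OF small] level by linarith+
qed

lemma arcA_above_arcB_chord: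
  assumes u: "u \<in> arcB" and v: "v \<in> arcB" and a: "a \<in> arcA"
  shows "chord_normal u v \<bullet> (a - centreB) > chord_level u v"
proof -
  have ux: "\<bar>fst u\<bar> \<le> 5" and vx: "\<bar>fst v\<bar> \<le> 5" and ax: "\<bar>fst a\<bar> \<le> 5"
    using u v a unfolding mem_arcB_iff mem_arcA_iff by auto
  have "\<bar>fst u * fst v\<bar> \<le> 5 * 5"
    unfolding abs_mult using ux vx by (intro mult_mono) auto
  then have "fst u * fst v \<le> 5 * 5"
    by linarith
  moreover have "(snd u + 107/4) * (snd v + 107/4) \<le> (101/4) * (101/4)"
    using arcB_height[OF u] arcB_height[OF v] by (intro mult_mono) auto
  moreover have "- (5 * 10) \<le> fst a * (fst u + fst v)"
  proof -
    have "\<bar>fst a * (fst u + fst v)\<bar> \<le> 5 * 10"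
      unfolding abs_mult using ax ux vx by (intro mult_mono) auto
    then show ?thesis by linarith
  qed
  moreover have "(113/4) * (99/2) \<le> (snd a + 107/4) * ((snd u + 107/4) + (snd v + 107/4))"
    using arcA_height[OF a] arcB_height[OF u] arcB_height[OF v] by (intro mult_mono) auto
  ultimately show ?thesis
    unfolding chord_normal_def chord_level_def inner_prod_def centreB_def
    by (simp add: power2_eq_square algebra_simps)
qed

lemma closed_segment_arcAB_disjoint_arcB_chord_ordered:
  assumes a: "a \<in> arcA" and b: "b \<in> arcB" and c: "c \<in> arcB" and d: "d \<in> arcB"
    and "b \<noteq> c" "b \<noteq> d" "fst c < fst d"
  shows "closed_segment a b \<inter> closed_segment c d = {}"
proof -
  have "fst b \<noteq> fst c" "fst b \<noteq> fst d"
    using inj_on_fst_arcB b c d assms(5,6) by (auto dest: inj_onD)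
  then consider "fst c < fst b" "fst b < fst d" | "fst b < fst c" | "fst d < fst b"
    using \<open>fst c < fst d\<close> by linarith
  then show ?thesis
  proof cases
    case 1
    then have "chord_normal c d \<bullet> (b - centreB) > chord_level c d"
      using c d b by (intro arcB_between_above_chord) (auto intro: mult_pos_neg)
    then show ?thesis
      using arcA_above_arcB_chord[OF c d a] arcB_on_chord[OF c d]
      by (intro closed_segments_disjoint_halfspaces) auto
  next
    case 2
    then have "chord_normal b c \<bullet> (d - centreB) < chord_level b c"
      using b c d \<open>fst c < fst d\<close> by (intro arcB_outside_below_chord) (auto intro: mult_pos_pos)
    then show ?thesis
      using arcA_above_arcB_chord[OF b c a] arcB_on_chord[OF b c] \<open>b \<noteq> c\<close>
      by (intro closed_segments_disjoint_touching_hyperplane) auto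
  next
    case 3
    then have "chord_normal b d \<bullet> (c - centreB) < chord_level b d"
      using b c d \<open>fst c < fst d\<close> by (intro arcB_outside_below_chord) (auto intro: mult_neg_neg)
    then have "closed_segment a b \<inter> closed_segment d c = {}"
      using arcA_above_arcB_chord[OF b d a] arcB_on_chord[OF b d] \<open>b \<noteq> d\<close>
      by (intro closed_segments_disjoint_touching_hyperplane) auto
    then show ?thesis
      by (simp add: closed_segment_commute)
  qed
qed

lemma closed_segment_arcAB_disjoint_arcB_chord:
  assumes "a \<in> arcA" "b \<in> arcB" "c \<in> arcB" "d \<in> arcB" "b \<noteq> c" "b \<noteq> d" "c \<noteq> d"
  shows "closed_segment a b \<inter> closed_segment c d = {}"
proof -
  have "fst c \<noteq> fst d"
    using inj_on_fst_arcB assms(3,4,7) by (auto dest: inj_onD)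
  then consider "fst c < fst d" | "fst d < fst c"
    by linarith
  then show ?thesis
  proof cases
    case 1
    then show ?thesis
      using closed_segment_arcAB_disjoint_arcB_chord_ordered assms by blast
  next
    case 2
    then have "closed_segment a b \<inter> closed_segment d c = {}"
      using closed_segment_arcAB_disjoint_arcB_chord_ordered assms by blast
    then show ?thesis
      by (simp add: closed_segment_commute)
  qed
qed

lemma card_4_subset_eq_distinct:
  assumes "card {a, b, c, d} = 4" "{a, b, c, d} \<subseteq> {s1, s2, t1, t2}"
  shows "{s1, s2, t1, t2} = {a, b, c, d}" and "distinct [s1, s2, t1, t2]"
proof -
  have "card {s1, s2, t1, t2} \<le> 4"
    using card_length[of "[s1, s2, t1, t2]"] by simp
  then show eq: "{s1, s2, t1, t2} = {a, b, c, d}"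
    using assms by (intro card_seteq[symmetric]) simp_all
  show "distinct [s1, s2, t1, t2]"
    using assms(1) unfolding eq[symmetric] by (intro card_distinct) simp
qed

lemma crossing_segments_ends_not_one_A_three_B:
  assumes cross: "closed_segment s1 s2 \<inter> closed_segment t1 t2 \<noteq> {}"
    and abcd: "a \<in> arcA" "b \<in> arcB" "c \<in> arcB" "d \<in> arcB" "b \<noteq> c" "b \<noteq> d" "c \<noteq> d"
    and sub: "{a, b, c, d} \<subseteq> {s1, s2, t1, t2}"
  shows False
proof -
  have "a \<notin> {b, c, d}"
    using abcd(1-4) arcA_arcB_disjoint by blast
  then have "card {a, b, c, d} = 4"
    using abcd(5-7) by simp
  note endpoints = card_4_subset_eq_distinct[OF this sub]
  from endpoints(2) have dist: "s1 \<noteq> s2" "s1 \<noteq> t1" "s1 \<noteq> t2" "s2 \<noteq> t1" "s2 \<noteq> t2" "t1 \<noteq> t2"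
    by simp_all
  have inB: "q \<in> arcB" if "q \<in> {s1, s2, t1, t2}" "q \<noteq> a" for q
    using that abcd(2-4) unfolding endpoints(1) by blast
  have "a \<in> {s1, s2, t1, t2}"
    using sub by blast
  then consider "a = s1" | "a = s2" | "a = t1" | "a = t2"
    by blast
  then show False
  proof cases
    case 1
    have "closed_segment s1 s2 \<inter> closed_segment t1 t2 = {}"
      by (rule closed_segment_arcAB_disjoint_arcB_chord) (use abcd(1) inB dist 1 in blast)+
    then show False
      using cross by simp
  next
    case 2
    have "closed_segment s2 s1 \<inter> closed_segment t1 t2 = {}"
      by (rule closed_segment_arcAB_disjoint_arcB_chord) (use abcd(1) inB dist 2 in blast)+
    then show False
      using cross by (simp add: closed_segment_commute)
  next
    case 3
    have "closed_segment t1 t2 \<inter> closed_segment s1 s2 = {}"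
      by (rule closed_segment_arcAB_disjoint_arcB_chord) (use abcd(1) inB dist 3 in blast)+
    then show False
      using cross by blast
  next
    case 4
    have "closed_segment t2 t1 \<inter> closed_segment s1 s2 = {}"
      by (rule closed_segment_arcAB_disjoint_arcB_chord) (use abcd(1) inB dist 4 in blast)+
    then show False
      using cross by (auto simp: closed_segment_commute)
  qed
qed

lemma crossing_segments_avoid_a_pair:
  assumes cross: "closed_segment s1 s2 \<inter> closed_segment t1 t2 \<noteq> {}"
    and arcs: "{a1, a2} \<subseteq> arcA" "{b1, b2, b3, b4, b5, b6} \<subseteq> arcB"
    and b_disj: "{b1, b2} \<inter> {b3, b4} = {}" "{b1, b2} \<inter> {b5, b6} = {}" "{b3, b4} \<inter> {b5, b6} = {}"
  obtains c d where "(c, d) \<in> {(a1, a2), (b1, b2), (b3, b4), (b5, b6)}" "{c, d} \<inter> {s1, s2, t1, t2} = {}"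
proof (rule ccontr)
  assume "\<not> thesis"
  then have "{a1, a2} \<inter> {s1, s2, t1, t2} \<noteq> {}" "{b1, b2} \<inter> {s1, s2, t1, t2} \<noteq> {}"
    "{b3, b4} \<inter> {s1, s2, t1, t2} \<noteq> {}" "{b5, b6} \<inter> {s1, s2, t1, t2} \<noteq> {}"
    using that by blast+
  then obtain e1 e2 e3 e4 where e: "e1 \<in> {a1, a2}" "e2 \<in> {b1, b2}" "e3 \<in> {b3, b4}" "e4 \<in> {b5, b6}"
    and "e1 \<in> {s1, s2, t1, t2}" "e2 \<in> {s1, s2, t1, t2}" "e3 \<in> {s1, s2, t1, t2}" "e4 \<in> {s1, s2, t1, t2}"
    by (meson disjoint_iff)
  then have sub: "{e1, e2, e3, e4} \<subseteq> {s1, s2, t1, t2}"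
    by blast
  have ends: "e1 \<in> arcA" "e2 \<in> arcB" "e3 \<in> arcB" "e4 \<in> arcB"
    using e arcs by blast+
  have "e2 \<noteq> e3" "e2 \<noteq> e4" "e3 \<noteq> e4"
    using e b_disj by blast+
  then show False
    by (rule crossing_segments_ends_not_one_A_three_B[OF cross ends _ _ _ sub])
qed

section \<open>Consecutive points of a chain\<close>

definition x_consecutive :: "(real \<times> real) set \<Rightarrow> real \<times> real \<Rightarrow> real \<times> real \<Rightarrow> bool" where
  "x_consecutive S u v \<longleftrightarrow>
     u \<in> S \<and> v \<in> S \<and> fst u < fst v \<and> (\<forall>e \<in> S - {u, v}. fst e < fst u \<or> fst v < fst e)"

lemma arcB_consecutive_chord_disjoint:
  assumes P: "P \<subseteq> arcA \<union> arcB" and uv: "x_consecutive (P \<inter> arcB) u v"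
    and e: "e \<in> P - {u, v}" and e': "e' \<in> P - {u, v}"
  shows "closed_segment u v \<inter> closed_segment e e' = {}"
proof -
  have u: "u \<in> arcB" and v: "v \<in> arcB" and "u \<noteq> v"
    using uv unfolding x_consecutive_def by auto
  have below: "chord_normal u v \<bullet> (w - centreB) < chord_level u v" if "w \<in> arcB" "w \<in> P - {u, v}" for w
  proof -
    have "fst u < fst v" "fst w < fst u \<or> fst v < fst w"
      using uv that unfolding x_consecutive_def by blast+
    then have "(fst w - fst u) * (fst w - fst v) > 0"
      by (auto intro: mult_pos_pos mult_neg_neg)
    then show ?thesis
      using u v that(1) by (rule arcB_outside_below_chord[rotated 3])
  qed
  consider "e \<in> arcB" "e' \<in> arcB" | "e \<in> arcA" "e' \<in> arcA" | "e \<in> arcA" "e' \<in> arcB" | "e \<in> arcB" "e' \<in> arcA"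
    using e e' P by auto
  then show ?thesis
  proof cases
    case 1
    then have "closed_segment e e' \<inter> closed_segment u v = {}"
      using below e e' arcB_on_chord[OF u v]
      by (intro closed_segments_disjoint_halfspaces[where n = "- chord_normal u v" and c = centreB and k = "- chord_level u v"]) auto
    then show ?thesis by blast
  next
    case 2
    then have "closed_segment e e' \<inter> closed_segment u v = {}"
      using arcA_above_arcB_chord[OF u v] arcB_on_chord[OF u v]
      by (intro closed_segments_disjoint_halfspaces[where n = "chord_normal u v" and c = centreB and k = "chord_level u v"]) simp_all
    then show ?thesis by blast
  next
    case 3
    then have "closed_segment e e' \<inter> closed_segment u v = {}"
      using e' \<open>u \<noteq> v\<close> u v by (intro closed_segment_arcAB_disjoint_arcB_chord) auto
    then show ?thesis by blast
  next
    case 4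
    then have "closed_segment e' e \<inter> closed_segment u v = {}"
      using e \<open>u \<noteq> v\<close> u v by (intro closed_segment_arcAB_disjoint_arcB_chord) auto
    then show ?thesis by (auto simp: closed_segment_commute)
  qed
qed

lemma x_consecutive_reflect_iff:
  "x_consecutive (reflect ` S) (reflect u) (reflect v) \<longleftrightarrow> x_consecutive S u v"
proof -
  have "reflect ` S - {reflect u, reflect v} = reflect ` (S - {u, v})"
    by (simp add: image_set_diff[OF inj_reflect])
  then show ?thesis
    unfolding x_consecutive_def by (simp add: inj_image_mem_iff[OF inj_reflect])
qed

lemma arcA_consecutive_chord_disjoint:
  assumes P: "P \<subseteq> arcA \<union> arcB" and uv: "x_consecutive (P \<inter> arcA) u v"
    and e: "e \<in> P - {u, v}" and e': "e' \<in> P - {u, v}"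
  shows "closed_segment u v \<inter> closed_segment e e' = {}"
proof -
  have "reflect ` P \<inter> arcB = reflect ` (P \<inter> arcA)"
    by auto
  then have "x_consecutive (reflect ` P \<inter> arcB) (reflect u) (reflect v)"
    using uv by (simp add: x_consecutive_reflect_iff)
  moreover have "reflect ` P \<subseteq> arcA \<union> arcB"
    using P by auto
  ultimately have "closed_segment (reflect u) (reflect v) \<inter> closed_segment (reflect e) (reflect e') = {}"
    using e e' inj_reflect by (intro arcB_consecutive_chord_disjoint) (auto simp: inj_image_mem_iff)
  then have "reflect ` (closed_segment u v \<inter> closed_segment e e') = {}"
    by (simp add: closed_segment_linear_image[OF linear_reflect] image_Int[OF inj_reflect])
  then show ?thesis
    by blast
qed

lemma consecutive_chord_disjoint:
  assumes "P \<subseteq> arcA \<union> arcB" "x_consecutive (P \<inter> arcA) u v \<or> x_consecutive (P \<inter> arcB) u v"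
    and "e \<in> P - {u, v}" "e' \<in> P - {u, v}"
  shows "closed_segment u v \<inter> closed_segment e e' = {}"
  using assms arcA_consecutive_chord_disjoint arcB_consecutive_chord_disjoint by blast

lemma obtain_leftmost_pair:
  assumes "finite S" "inj_on fst S" "2 \<le> card S"
  obtains u v where "x_consecutive S u v" "\<forall>e\<in>S - {u, v}. fst v < fst e"
proof -
  define u where "u = arg_min_on fst S"
  define v where "v = arg_min_on fst (S - {u})"
  have "S \<noteq> {}"
    using assms(3) by auto
  then have u: "u \<in> S" "\<forall>w\<in>S. fst u \<le> fst w"
    using arg_min_if_finite[OF assms(1), of fst] unfolding u_def by (auto simp: not_less)
  have "card (S - {u}) = card S - 1"
    using assms(1) u(1) by simp
  then have "0 < card (S - {u})"
    using assms(3) by linarith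
  then have "S - {u} \<noteq> {}"
    by (simp add: card_gt_0_iff)
  then have v: "v \<in> S - {u}" "\<forall>w\<in>S - {u}. fst v \<le> fst w"
    using arg_min_if_finite[of "S - {u}" fst] assms(1) unfolding v_def by (auto simp: not_less)
  have fst_neq: "fst w \<noteq> fst w'" if "w \<in> S" "w' \<in> S" "w \<noteq> w'" for w w'
    using assms(2) that by (auto dest: inj_onD)
  have "fst u \<le> fst v" "fst u \<noteq> fst v"
    using u v fst_neq[of u v] by auto
  then have "fst u < fst v"
    by simp
  moreover have right: "\<forall>e\<in>S - {u, v}. fst v < fst e"
  proof
    fix e
    assume e: "e \<in> S - {u, v}"
    then have "fst v \<le> fst e" "fst v \<noteq> fst e"
      using v fst_neq[of v e] by auto
    then show "fst v < fst e"
      by simp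
  qed
  ultimately have "x_consecutive S u v"
    using u(1) v(1) unfolding x_consecutive_def by blast
  then show thesis
    using right by (rule that)
qed

lemma x_consecutive_superset:
  assumes "x_consecutive S' u v" "S' \<subseteq> S" "\<forall>e\<in>S - S'. fst e < fst u"
  shows "x_consecutive S u v"
proof -
  have "fst e < fst u \<or> fst v < fst e" if "e \<in> S - {u, v}" for e
    using assms that unfolding x_consecutive_def by (cases "e \<in> S'") blast+
  then show ?thesis
    using assms(1,2) unfolding x_consecutive_def by blast
qed

lemma card_Diff_x_consecutive:
  assumes "finite S" "x_consecutive S u v"
  shows "card (S - {u, v}) = card S - 2"
proof -
  have "u \<in> S" "v \<in> S" "u \<noteq> v"
    using assms(2) unfolding x_consecutive_def by auto
  then show ?thesis
    using assms(1) by (simp add: card_Diff_subset)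
qed

lemma double_chain_consecutive_pairs:
  assumes "finite P" "2 \<le> card (P \<inter> arcA)" "6 \<le> card (P \<inter> arcB)"
  obtains a1 a2 b1 b2 b3 b4 b5 b6 where "x_consecutive (P \<inter> arcA) a1 a2"
    "x_consecutive (P \<inter> arcB) b1 b2" "x_consecutive (P \<inter> arcB) b3 b4" "x_consecutive (P \<inter> arcB) b5 b6"
    "{b1, b2} \<inter> {b3, b4} = {}" "{b1, b2} \<inter> {b5, b6} = {}" "{b3, b4} \<inter> {b5, b6} = {}"
proof -
  define B where "B = P \<inter> arcB"
  have fin: "finite S" and inj: "inj_on fst S" if "S \<subseteq> B" for S
    using that assms(1) inj_on_subset[OF inj_on_fst_arcB] finite_subset unfolding B_def by blast+
  have "finite (P \<inter> arcA)" "inj_on fst (P \<inter> arcA)"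
    using assms(1) inj_on_subset[OF inj_on_fst_arcA] by auto
  then obtain a1 a2 where a: "x_consecutive (P \<inter> arcA) a1 a2"
    using obtain_leftmost_pair assms(2) by blast
  have "2 \<le> card B"
    using assms(3) unfolding B_def by simp
  then obtain b1 b2 where b12: "x_consecutive B b1 b2" "\<forall>e\<in>B - {b1, b2}. fst b2 < fst e"
    using obtain_leftmost_pair[OF fin[OF order_refl] inj[OF order_refl]] by blast
  define B1 where "B1 = B - {b1, b2}"
  have "card B1 = card B - 2"
    unfolding B1_def by (rule card_Diff_x_consecutive[OF fin[OF order_refl] b12(1)])
  then have "2 \<le> card B1"
    using assms(3) unfolding B_def by simp
  then obtain b3 b4 where b34: "x_consecutive B1 b3 b4" "\<forall>e\<in>B1 - {b3, b4}. fst b4 < fst e"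
    using obtain_leftmost_pair[OF fin inj, of B1] unfolding B1_def by blast
  define B2 where "B2 = B1 - {b3, b4}"
  have "card B2 = card B1 - 2"
    unfolding B2_def by (rule card_Diff_x_consecutive[OF fin b34(1)]) (auto simp: B1_def)
  then have "2 \<le> card B2"
    using \<open>card B1 = card B - 2\<close> assms(3) unfolding B_def by simp
  then obtain b5 b6 where b56: "x_consecutive B2 b5 b6"
    using obtain_leftmost_pair[OF fin inj, of B2] unfolding B2_def B1_def by blast
  have "b3 \<in> B1" "b4 \<in> B1" "fst b3 < fst b4" "b5 \<in> B2" "b6 \<in> B2"
    using b34(1) b56 unfolding x_consecutive_def by blast+
  then have b_order: "fst b1 < fst b2" "fst b2 < fst b3" "fst b4 < fst b5"
    using b12 b34(2) unfolding x_consecutive_def B1_def B2_def by blast+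
  have b34_B: "x_consecutive B b3 b4"
  proof (rule x_consecutive_superset[OF b34(1)])
    show "B1 \<subseteq> B" "\<forall>e\<in>B - B1. fst e < fst b3"
      unfolding B1_def using b_order by auto
  qed
  have b56_B: "x_consecutive B b5 b6"
  proof (rule x_consecutive_superset[OF b56])
    show "B2 \<subseteq> B" "\<forall>e\<in>B - B2. fst e < fst b5"
      unfolding B2_def B1_def using b_order \<open>fst b3 < fst b4\<close> by auto
  qed
  have "{b1, b2} \<inter> {b3, b4} = {}" "{b1, b2} \<inter> {b5, b6} = {}" "{b3, b4} \<inter> {b5, b6} = {}"
    using \<open>b3 \<in> B1\<close> \<open>b4 \<in> B1\<close> \<open>b5 \<in> B2\<close> \<open>b6 \<in> B2\<close> unfolding B2_def B1_def by auto
  then show thesis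
    using that[OF a b12(1)[unfolded B_def] b34_B[unfolded B_def] b56_B[unfolded B_def]] by blast
qed

lemma closed_segment_neq_if_disjoint_ends:
  fixes a b c d :: "'a::euclidean_space"
  shows "{a, b} \<inter> {c, d} = {} \<Longrightarrow> closed_segment a b \<noteq> closed_segment c d"
  by auto

lemma mv_set_Diff_consecutive_chords:
  assumes P: "P \<subseteq> arcA \<union> arcB" and a: "x_consecutive (P \<inter> arcA) a1 a2"
    and b: "x_consecutive (P \<inter> arcB) b1 b2" "x_consecutive (P \<inter> arcB) b3 b4" "x_consecutive (P \<inter> arcB) b5 b6"
    and b_disj: "{b1, b2} \<inter> {b3, b4} = {}" "{b1, b2} \<inter> {b5, b6} = {}" "{b3, b4} \<inter> {b5, b6} = {}"
    and W: "W = {closed_segment a1 a2, closed_segment b1 b2, closed_segment b3 b4, closed_segment b5 b6}"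
  shows "mv_set (seg_vertices P) disj_adj (seg_vertices P - W)"
proof (rule mv_set_Diff_if_common_neighbours)
  define Q where "Q = {(a1, a2), (b1, b2), (b3, b4), (b5, b6)}"
  have consecutive: "x_consecutive (P \<inter> arcA) c d \<or> x_consecutive (P \<inter> arcB) c d" if "(c, d) \<in> Q" for c d
    using that a b unfolding Q_def by auto
  show "W \<subseteq> seg_vertices P"
    using a b unfolding W x_consecutive_def by (auto intro: closed_segment_in_seg_vertices)
  fix s t
  assume "s \<in> seg_vertices P - W" "t \<in> seg_vertices P - W" "s \<noteq> t" "\<not> disj_adj s t"
  then obtain s1 s2 t1 t2 where st: "s1 \<in> P" "s2 \<in> P" "t1 \<in> P" "t2 \<in> P"
    "s = closed_segment s1 s2" "t = closed_segment t1 t2"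
    and cross: "closed_segment s1 s2 \<inter> closed_segment t1 t2 \<noteq> {}"
    unfolding seg_vertices_def disj_adj_def by blast
  have arcs: "{a1, a2} \<subseteq> arcA" "{b1, b2, b3, b4, b5, b6} \<subseteq> arcB"
    using a b unfolding x_consecutive_def by auto
  obtain c d where cd: "(c, d) \<in> Q" "{c, d} \<inter> {s1, s2, t1, t2} = {}"
    using crossing_segments_avoid_a_pair[OF cross arcs b_disj] unfolding Q_def by blast
  then have "closed_segment c d \<in> W"
    unfolding Q_def W by auto
  moreover have "closed_segment c d \<inter> closed_segment e e' = {}"
    if "e \<in> {s1, s2, t1, t2}" "e' \<in> {s1, s2, t1, t2}" for e e'
    using that st cd(2) by (intro consecutive_chord_disjoint[OF P consecutive[OF cd(1)]]) blast+
  then have "disj_adj s (closed_segment c d)" "disj_adj (closed_segment c d) t"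
    unfolding disj_adj_def st by blast+
  ultimately show "\<exists>w\<in>W. disj_adj s w \<and> disj_adj w t"
    by blast
qed

lemma obtain_mv_set_double_chain:
  assumes P: "finite P" "P \<subseteq> arcA \<union> arcB" and "2 \<le> card (P \<inter> arcA)" "6 \<le> card (P \<inter> arcB)"
  obtains U where "mv_set (seg_vertices P) disj_adj U" "card U = card (seg_vertices P) - 4"
proof -
  obtain a1 a2 b1 b2 b3 b4 b5 b6 where a: "x_consecutive (P \<inter> arcA) a1 a2"
    and b: "x_consecutive (P \<inter> arcB) b1 b2" "x_consecutive (P \<inter> arcB) b3 b4" "x_consecutive (P \<inter> arcB) b5 b6"
    and b_disj: "{b1, b2} \<inter> {b3, b4} = {}" "{b1, b2} \<inter> {b5, b6} = {}" "{b3, b4} \<inter> {b5, b6} = {}"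
    by (rule double_chain_consecutive_pairs[OF P(1) assms(3,4)])
  define W where "W = {closed_segment a1 a2, closed_segment b1 b2, closed_segment b3 b4, closed_segment b5 b6}"
  have mv: "mv_set (seg_vertices P) disj_adj (seg_vertices P - W)"
    using mv_set_Diff_consecutive_chords[OF P(2) a b b_disj W_def] .
  have "W \<subseteq> seg_vertices P"
    using a b unfolding W_def x_consecutive_def by (auto intro: closed_segment_in_seg_vertices)
  have a_disj: "{a1, a2} \<inter> {b1, b2} = {}" "{a1, a2} \<inter> {b3, b4} = {}" "{a1, a2} \<inter> {b5, b6} = {}"
    using a b arcA_arcB_disjoint unfolding x_consecutive_def by blast+
  have "card W = 4"
    unfolding W_def
    using a_disj[THEN closed_segment_neq_if_disjoint_ends] b_disj[THEN closed_segment_neq_if_disjoint_ends]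
    by simp
  then have "card (seg_vertices P - W) = card (seg_vertices P) - 4"
    using \<open>W \<subseteq> seg_vertices P\<close> finite_seg_vertices[OF P(1)] by (simp add: card_Diff_subset finite_subset)
  then show thesis
    using mv that by blast
qed

theorem proposition6:
  fixes P :: "(real \<times> real) set" and p q :: nat
  assumes "p \<ge> 3" and "q \<ge> 6"
    and "double_chain P p q"
    and "general_position P"
  shows "mu (seg_vertices P) disj_adj = (p + q choose 2) - 4"
proof -
  have fin: "finite P" and P: "P \<subseteq> arcA \<union> arcB" and pq: "card (P \<inter> arcA) = p" "card (P \<inter> arcB) = q"
    using assms(3) unfolding double_chain_def by auto
  have "P = (P \<inter> arcA) \<union> (P \<inter> arcB)" "(P \<inter> arcA) \<inter> (P \<inter> arcB) = {}"
    using P arcA_arcB_disjoint by blast+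
  then have "card P = p + q"
    using fin pq card_Un_disjoint[of "P \<inter> arcA" "P \<inter> arcB"] by simp
  obtain U where "mv_set (seg_vertices P) disj_adj U" "card U = card (seg_vertices P) - 4"
    using obtain_mv_set_double_chain[OF fin P] pq assms(1,2) by auto
  moreover have "card U' \<le> card (seg_vertices P) - 4" if "mv_set (seg_vertices P) disj_adj U'" for U'
    using mv_set_card_le[OF assms(4) fin _ that] \<open>card P = p + q\<close> assms(1,2) by simp
  ultimately have "mu (seg_vertices P) disj_adj = card (seg_vertices P) - 4"
    by (rule mu_eqI)
  then show ?thesis
    using card_seg_vertices[OF fin] \<open>card P = p + q\<close> by simp
qed

end
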